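(* Let $\mathbb{A}$ be a 2-category and $p:e\to b$ a 1-cell such that $\mathbb{A}$ has the two-dimensional cokernel diagram of $p$, a right Kan extension $(t,\gamma)$ of $p$ along $p$ exists, and it is preserved by $\delta^0:b\to b\uparrow_pb$. Let $(b,t,m,\eta)$ be the codensity monad of $p$, let $\ell:b\uparrow_pb\to b$ be the unique 1-cell with $\ell\delta^0=\mathrm{id}_b$, $\ell\delta^1=t$, $\mathrm{id}_\ell\ast\alpha=\gamma$, and let $\bar\ell:b\uparrow_pb\uparrow_pb\to b$ be the unique 1-cell with $\bar\ell D^0=\ell$ and $\bar\ell D^2=t\ell$. Then there are 2-cells $\theta:s^0\Rightarrow\ell$ and $\lambda:\bar\ell D^1\Rightarrow\ell$ (between 1-cells $b\uparrow_pb\to b$) such that $$\theta\ast\mathrm{id}_{\delta^1}=\eta,\quad \theta\ast\mathrm{id}_{\delta^0}=\mathrm{id}_{\mathrm{id}_b},\quad \lambda\ast\mathrm{id}_{\delta^1}=m,\quad \lambda\ast\mathrm{id}_{\delta^0}=\mathrm{id}_{\mathrm{id}_b}.$$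
   Context: A 2-category is a $\mathbf{Cat}$-enriched category; composition of 1-cells is juxtaposition, vertical composition of 2-cells is $\cdot$, horizontal composition is $\ast$, $\mathrm{id}_f$ is the identity 2-cell on $f$. Opcomma object of $p$ along itself: an object $b\uparrow_p b$ with 1-cells $\delta^0,\delta^1:b\to b\uparrow_p b$ and a 2-cell $\alpha:\delta^1p\Rightarrow\delta^0p$ such that for every object $y$ the functor $h\mapsto(h\delta^0,h\delta^1,\mathrm{id}_h\ast\alpha)$, $\xi\mapsto(\xi\ast\mathrm{id}_{\delta^0},\xi\ast\mathrm{id}_{\delta^1})$ is an isomorphism from $\mathbb{A}(b\uparrow_p b,y)$ onto the category of triples $(h_0,h_1:b\to y,\ \beta:h_1p\Rightarrow h_0p)$ with morphisms pairs of 2-cells $(\xi_0:h_0\Rightarrow h_0',\xi_1:h_1\Rightarrow h_1')$ satisfying $(\xi_0\ast\mathrm{id}_p)\cdot\beta=\beta'\cdot(\xi_1\ast\mathrm{id}_p)$. Two-dimensional pushout of a span $f_0:c\to c_0$, $f_1:c\to c_1$: an object $P$ with $q_0:c_0\to P$, $q_1:c_1\to P$, $q_0f_0=q_1f_1$, such that for every $y$, $k\mapsto(kq_0,kq_1)$ is an isomorphism from $\mathbb{A}(P,y)$ onto the category of pairs $(k_0,k_1)$ with $k_0f_0=k_1f_1$, whose morphisms are pairs of 2-cells $(\xi_0,\xi_1)$ with $\xi_0\ast\mathrm{id}_{f_0}=\xi_1\ast\mathrm{id}_{f_1}$. $\mathbb{A}$ has the two-dimensional cokernel diagram of $p$ if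 it has an opcomma object $b\uparrow_p b$ of $p$ along itself and a two-dimensional pushout $b\uparrow_pb\uparrow_pb$ of the span $(\delta^0,\delta^1)$, with 1-cells $D^0,D^2:b\uparrow_pb\to b\uparrow_pb\uparrow_pb$ satisfying $D^2\delta^0=D^0\delta^1$. Then $D^1$ is the unique 1-cell with $D^1\delta^1=D^2\delta^1$, $D^1\delta^0=D^0\delta^0$, $\mathrm{id}_{D^1}\ast\alpha=(\mathrm{id}_{D^0}\ast\alpha)\cdot(\mathrm{id}_{D^2}\ast\alpha)$, and $s^0:b\uparrow_pb\to b$ is the unique 1-cell with $s^0\delta^0=s^0\delta^1=\mathrm{id}_b$ and $\mathrm{id}_{s^0}\ast\alpha=\mathrm{id}_p$. Right Kan extension of $f:z\to y$ along $g:z\to x$: a pair $(r:x\to y,\gamma:rg\Rightarrow f)$ such that for each $k:x\to y$, $\beta\mapsto\gamma\cdot(\beta\ast\mathrm{id}_g)$ is a bijection from 2-cells $k\Rightarrow r$ to 2-cells $kg\Rightarrow f$; a 1-cell $d$ preserves it if $(dr,\mathrm{id}_d\ast\gamma)$ is a right Kan extension of $df$ along $g$. Codensity monad: if $(t,\gamma)$ is a right Kan extension of $p$ along $p$, then $m:tt\Rightarrow t$ is the unique 2-cell with $\gamma\cdot(m\ast\mathrm{id}_p)=\gamma\cdot(\mathrm{id}_t\ast\gamma)$ and $\eta:\mathrm{id}_b\Rightarrow t$ the unique 2-cell with $\gamma\cdot(\eta\ast\mathrm{id}_p)=\mathrm{id}_p$; $(b,t,m,\eta)$ is a monad, the codensity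 monad of $p$. *)

theory Defs
  imports Main
begin

text \<open>A 2-category with objects of type 'o, 1-cells of type 'a and 2-cells of type 'c.
  cmp1 g f is the composite "g f" (first f, then g); vcmp b a is "b \<cdot> a" (first a);
  hcmp b a is "b \<ast> a"; idt1 x is id_x; idt2 f is id_f.\<close>

record ('o, 'a, 'c) tcat =
  obj  :: "'o set"
  arr1 :: "'a set"
  arr2 :: "'c set"
  dom1 :: "'a \<Rightarrow> 'o"
  cod1 :: "'a \<Rightarrow> 'o"
  cmp1 :: "'a \<Rightarrow> 'a \<Rightarrow> 'a"
  idt1 :: "'o \<Rightarrow> 'a"
  src2 :: "'c \<Rightarrow> 'a"
  tgt2 :: "'c \<Rightarrow> 'a"
  vcmp :: "'c \<Rightarrow> 'c \<Rightarrow> 'c"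
  hcmp :: "'c \<Rightarrow> 'c \<Rightarrow> 'c"
  idt2 :: "'a \<Rightarrow> 'c"

definition two_category :: "('o, 'a, 'c) tcat \<Rightarrow> bool" where
  "two_category A \<longleftrightarrow>
    (\<forall>f\<in>arr1 A. dom1 A f \<in> obj A \<and> cod1 A f \<in> obj A) \<and>
    (\<forall>x\<in>obj A. idt1 A x \<in> arr1 A \<and> dom1 A (idt1 A x) = x \<and> cod1 A (idt1 A x) = x) \<and>
    (\<forall>g\<in>arr1 A. \<forall>f\<in>arr1 A. dom1 A g = cod1 A f \<longrightarrow>
        cmp1 A g f \<in> arr1 A \<and> dom1 A (cmp1 A g f) = dom1 A f \<and> cod1 A (cmp1 A g f) = cod1 A g) \<and>
    (\<forall>h\<in>arr1 A. \<forall>g\<in>arr1 A. \<forall>f\<in>arr1 A. dom1 A h = cod1 A g \<and> dom1 A g = cod1 A f \<longrightarrow>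
        cmp1 A h (cmp1 A g f) = cmp1 A (cmp1 A h g) f) \<and>
    (\<forall>f\<in>arr1 A. cmp1 A (idt1 A (cod1 A f)) f = f \<and> cmp1 A f (idt1 A (dom1 A f)) = f) \<and>
    (\<forall>a\<in>arr2 A. src2 A a \<in> arr1 A \<and> tgt2 A a \<in> arr1 A \<and>
        dom1 A (src2 A a) = dom1 A (tgt2 A a) \<and> cod1 A (src2 A a) = cod1 A (tgt2 A a)) \<and>
    (\<forall>f\<in>arr1 A. idt2 A f \<in> arr2 A \<and> src2 A (idt2 A f) = f \<and> tgt2 A (idt2 A f) = f) \<and>
    (\<forall>b\<in>arr2 A. \<forall>a\<in>arr2 A. src2 A b = tgt2 A a \<longrightarrow>
        vcmp A b a \<in> arr2 A \<and> src2 A (vcmp A b a) = src2 A a \<and> tgt2 A (vcmp A b a) = tgt2 A b) \<and>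
    (\<forall>c\<in>arr2 A. \<forall>b\<in>arr2 A. \<forall>a\<in>arr2 A. src2 A c = tgt2 A b \<and> src2 A b = tgt2 A a \<longrightarrow>
        vcmp A c (vcmp A b a) = vcmp A (vcmp A c b) a) \<and>
    (\<forall>a\<in>arr2 A. vcmp A (idt2 A (tgt2 A a)) a = a \<and> vcmp A a (idt2 A (src2 A a)) = a) \<and>
    (\<forall>b\<in>arr2 A. \<forall>a\<in>arr2 A. dom1 A (src2 A b) = cod1 A (src2 A a) \<longrightarrow>
        hcmp A b a \<in> arr2 A \<and> src2 A (hcmp A b a) = cmp1 A (src2 A b) (src2 A a) \<and>
        tgt2 A (hcmp A b a) = cmp1 A (tgt2 A b) (tgt2 A a)) \<and>
    (\<forall>c\<in>arr2 A. \<forall>b\<in>arr2 A. \<forall>a\<in>arr2 A.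
        dom1 A (src2 A c) = cod1 A (src2 A b) \<and> dom1 A (src2 A b) = cod1 A (src2 A a) \<longrightarrow>
        hcmp A c (hcmp A b a) = hcmp A (hcmp A c b) a) \<and>
    (\<forall>a\<in>arr2 A. hcmp A (idt2 A (idt1 A (cod1 A (src2 A a)))) a = a \<and>
        hcmp A a (idt2 A (idt1 A (dom1 A (src2 A a)))) = a) \<and>
    (\<forall>g\<in>arr1 A. \<forall>f\<in>arr1 A. dom1 A g = cod1 A f \<longrightarrow>
        hcmp A (idt2 A g) (idt2 A f) = idt2 A (cmp1 A g f)) \<and>
    (\<forall>d\<in>arr2 A. \<forall>c\<in>arr2 A. \<forall>b\<in>arr2 A. \<forall>a\<in>arr2 A.
        src2 A d = tgt2 A c \<and> src2 A b = tgt2 A a \<and> dom1 A (src2 A d) = cod1 A (src2 A b) \<longrightarrow>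
        hcmp A (vcmp A d c) (vcmp A b a) = vcmp A (hcmp A d b) (hcmp A c a))"

definition hom :: "('o, 'a, 'c) tcat \<Rightarrow> 'o \<Rightarrow> 'o \<Rightarrow> 'a set" where
  "hom A x y = {f \<in> arr1 A. dom1 A f = x \<and> cod1 A f = y}"

definition cells :: "('o, 'a, 'c) tcat \<Rightarrow> 'o \<Rightarrow> 'o \<Rightarrow> 'c set" where
  "cells A x y = {a \<in> arr2 A. src2 A a \<in> hom A x y \<and> tgt2 A a \<in> hom A x y}"

definition cell :: "('o, 'a, 'c) tcat \<Rightarrow> 'c \<Rightarrow> 'a \<Rightarrow> 'a \<Rightarrow> bool" where
  "cell A a f g \<longleftrightarrow> a \<in> arr2 A \<and> src2 A a = f \<and> tgt2 A a = g"

definition opc_triples :: "('o, 'a, 'c) tcat \<Rightarrow> 'a \<Rightarrow> 'o \<Rightarrow> ('a \<times> 'a \<times> 'c) set" where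
  "opc_triples A p y = {(h0, h1, \<beta>). h0 \<in> hom A (cod1 A p) y \<and> h1 \<in> hom A (cod1 A p) y \<and>
      cell A \<beta> (cmp1 A h1 p) (cmp1 A h0 p)}"

definition opc_morphs :: "('o, 'a, 'c) tcat \<Rightarrow> 'a \<Rightarrow> 'o \<Rightarrow>
    (('a \<times> 'a \<times> 'c) \<times> ('a \<times> 'a \<times> 'c) \<times> 'c \<times> 'c) set" where
  "opc_morphs A p y = {((h0, h1, \<beta>), (h0', h1', \<beta>'), \<xi>0, \<xi>1).
      (h0, h1, \<beta>) \<in> opc_triples A p y \<and> (h0', h1', \<beta>') \<in> opc_triples A p y \<and>
      cell A \<xi>0 h0 h0' \<and> cell A \<xi>1 h1 h1' \<and>
      vcmp A (hcmp A \<xi>0 (idt2 A p)) \<beta> = vcmp A \<beta>' (hcmp A \<xi>1 (idt2 A p))}"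

definition opc_obj_map :: "('o, 'a, 'c) tcat \<Rightarrow> 'a \<Rightarrow> 'a \<Rightarrow> 'c \<Rightarrow> 'a \<Rightarrow> 'a \<times> 'a \<times> 'c" where
  "opc_obj_map A d0 d1 \<alpha> h = (cmp1 A h d0, cmp1 A h d1, hcmp A (idt2 A h) \<alpha>)"

text \<open>(c, d0, d1, alpha) is an opcomma object of p along itself: for every y the functor
  \<open>\<bbbA>(c,y) \<rightarrow> triples\<close> is an isomorphism of categories (bijective on objects and on morphisms).\<close>
definition is_opcomma :: "('o, 'a, 'c) tcat \<Rightarrow> 'a \<Rightarrow> 'o \<Rightarrow> 'a \<Rightarrow> 'a \<Rightarrow> 'c \<Rightarrow> bool" where
  "is_opcomma A p c d0 d1 \<alpha> \<longleftrightarrow>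
     c \<in> obj A \<and> d0 \<in> hom A (cod1 A p) c \<and> d1 \<in> hom A (cod1 A p) c \<and>
     cell A \<alpha> (cmp1 A d1 p) (cmp1 A d0 p) \<and>
     (\<forall>y\<in>obj A.
        bij_betw (opc_obj_map A d0 d1 \<alpha>) (hom A c y) (opc_triples A p y) \<and>
        bij_betw (\<lambda>\<xi>. (opc_obj_map A d0 d1 \<alpha> (src2 A \<xi>), opc_obj_map A d0 d1 \<alpha> (tgt2 A \<xi>),
                        hcmp A \<xi> (idt2 A d0), hcmp A \<xi> (idt2 A d1)))
                 (cells A c y) (opc_morphs A p y))"

definition po_pairs :: "('o, 'a, 'c) tcat \<Rightarrow> 'a \<Rightarrow> 'a \<Rightarrow> 'o \<Rightarrow> ('a \<times> 'a) set" where
  "po_pairs A f0 f1 y = {(k0, k1). k0 \<in> hom A (cod1 A f0) y \<and> k1 \<in> hom A (cod1 A f1) y \<and>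
      cmp1 A k0 f0 = cmp1 A k1 f1}"

definition po_morphs :: "('o, 'a, 'c) tcat \<Rightarrow> 'a \<Rightarrow> 'a \<Rightarrow> 'o \<Rightarrow>
    (('a \<times> 'a) \<times> ('a \<times> 'a) \<times> 'c \<times> 'c) set" where
  "po_morphs A f0 f1 y = {((k0, k1), (k0', k1'), \<xi>0, \<xi>1).
      (k0, k1) \<in> po_pairs A f0 f1 y \<and> (k0', k1') \<in> po_pairs A f0 f1 y \<and>
      cell A \<xi>0 k0 k0' \<and> cell A \<xi>1 k1 k1' \<and>
      hcmp A \<xi>0 (idt2 A f0) = hcmp A \<xi>1 (idt2 A f1)}"

definition is_2pushout :: "('o, 'a, 'c) tcat \<Rightarrow> 'a \<Rightarrow> 'a \<Rightarrow> 'o \<Rightarrow> 'a \<Rightarrow> 'a \<Rightarrow> bool" where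
  "is_2pushout A f0 f1 P q0 q1 \<longleftrightarrow>
     f0 \<in> arr1 A \<and> f1 \<in> arr1 A \<and> dom1 A f0 = dom1 A f1 \<and> P \<in> obj A \<and>
     q0 \<in> hom A (cod1 A f0) P \<and> q1 \<in> hom A (cod1 A f1) P \<and> cmp1 A q0 f0 = cmp1 A q1 f1 \<and>
     (\<forall>y\<in>obj A.
        bij_betw (\<lambda>k. (cmp1 A k q0, cmp1 A k q1)) (hom A P y) (po_pairs A f0 f1 y) \<and>
        bij_betw (\<lambda>\<xi>. ((cmp1 A (src2 A \<xi>) q0, cmp1 A (src2 A \<xi>) q1),
                        (cmp1 A (tgt2 A \<xi>) q0, cmp1 A (tgt2 A \<xi>) q1),
                        hcmp A \<xi> (idt2 A q0), hcmp A \<xi> (idt2 A q1)))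
                 (cells A P y) (po_morphs A f0 f1 y))"

definition is_ran :: "('o, 'a, 'c) tcat \<Rightarrow> 'a \<Rightarrow> 'a \<Rightarrow> 'a \<Rightarrow> 'c \<Rightarrow> bool" where
  "is_ran A f g r \<gamma> \<longleftrightarrow>
     f \<in> arr1 A \<and> g \<in> arr1 A \<and> dom1 A f = dom1 A g \<and>
     r \<in> hom A (cod1 A g) (cod1 A f) \<and> cell A \<gamma> (cmp1 A r g) f \<and>
     (\<forall>k\<in>hom A (cod1 A g) (cod1 A f).
        bij_betw (\<lambda>\<beta>. vcmp A \<gamma> (hcmp A \<beta> (idt2 A g)))
          {\<beta>. cell A \<beta> k r} {\<beta>. cell A \<beta> (cmp1 A k g) f})"

definition preserves_ran :: "('o, 'a, 'c) tcat \<Rightarrow> 'a \<Rightarrow> 'a \<Rightarrow> 'a \<Rightarrow> 'a \<Rightarrow> 'c \<Rightarrow> bool" where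
  "preserves_ran A d f g r \<gamma> \<longleftrightarrow>
     is_ran A (cmp1 A d f) g (cmp1 A d r) (hcmp A (idt2 A d) \<gamma>)"

end

theory Submission
  imports Defs
begin

text \<open>Both 2-cells come from the two-dimensional universal property of the opcomma object:
  a 2-cell between 1-cells out of it is given by its whiskerings with d0 and d1, subject to one
  compatibility condition with alpha. For theta this condition is the unit law of the codensity
  monad. For lambda it is the defining equation of m, once id(lb D1) * alpha = gamma . (id t * gamma)
  has been obtained by whiskering the pasting equation that defines D1 with lb.\<close>

lemma opcomma_cell_exists:
  assumes opc: "is_opcomma A p c d0 d1 \<alpha>" and y: "y \<in> obj A"
    and h: "h \<in> hom A c y" and g: "g \<in> hom A c y"
    and \<xi>0: "cell A \<xi>0 (cmp1 A h d0) (cmp1 A g d0)" and \<xi>1: "cell A \<xi>1 (cmp1 A h d1) (cmp1 A g d1)"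
    and compat: "vcmp A (hcmp A \<xi>0 (idt2 A p)) (hcmp A (idt2 A h) \<alpha>) =
      vcmp A (hcmp A (idt2 A g) \<alpha>) (hcmp A \<xi>1 (idt2 A p))"
  shows "\<exists>\<xi>. cell A \<xi> h g \<and> hcmp A \<xi> (idt2 A d0) = \<xi>0 \<and> hcmp A \<xi> (idt2 A d1) = \<xi>1"
proof -
  let ?F = "opc_obj_map A d0 d1 \<alpha>"
  have on_objs: "bij_betw ?F (hom A c y) (opc_triples A p y)"
    and on_cells: "bij_betw (\<lambda>\<xi>. (?F (src2 A \<xi>), ?F (tgt2 A \<xi>), hcmp A \<xi> (idt2 A d0), hcmp A \<xi> (idt2 A d1)))
      (cells A c y) (opc_morphs A p y)"
    using opc y unfolding is_opcomma_def by auto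
  have "?F h \<in> opc_triples A p y" "?F g \<in> opc_triples A p y"
    using on_objs h g bij_betw_apply by fast+
  then have "(?F h, ?F g, \<xi>0, \<xi>1) \<in> opc_morphs A p y"
    using \<xi>0 \<xi>1 compat unfolding opc_morphs_def opc_obj_map_def by auto
  then obtain \<xi> where \<xi>: "\<xi> \<in> cells A c y"
    and F\<xi>: "(?F (src2 A \<xi>), ?F (tgt2 A \<xi>), hcmp A \<xi> (idt2 A d0), hcmp A \<xi> (idt2 A d1)) = (?F h, ?F g, \<xi>0, \<xi>1)"
    using on_cells unfolding bij_betw_def by (metis (no_types, lifting) imageE)
  have "src2 A \<xi> = h" "tgt2 A \<xi> = g"
    using \<xi> F\<xi> h g on_objs unfolding bij_betw_def inj_on_def cells_def by auto
  then show ?thesis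
    using \<xi> F\<xi> unfolding cell_def cells_def by auto
qed

locale two_cat =
  fixes A :: "('o, 'a, 'c) tcat"
  assumes dom1_cod1_obj: "f \<in> arr1 A \<Longrightarrow> dom1 A f \<in> obj A \<and> cod1 A f \<in> obj A"
    and idt1_typing: "x \<in> obj A \<Longrightarrow> idt1 A x \<in> arr1 A \<and> dom1 A (idt1 A x) = x \<and> cod1 A (idt1 A x) = x"
    and cmp1_typing: "g \<in> arr1 A \<Longrightarrow> f \<in> arr1 A \<Longrightarrow> dom1 A g = cod1 A f \<Longrightarrow>
      cmp1 A g f \<in> arr1 A \<and> dom1 A (cmp1 A g f) = dom1 A f \<and> cod1 A (cmp1 A g f) = cod1 A g"
    and cmp1_assoc': "h \<in> arr1 A \<Longrightarrow> g \<in> arr1 A \<Longrightarrow> f \<in> arr1 A \<Longrightarrow>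
      dom1 A h = cod1 A g \<and> dom1 A g = cod1 A f \<Longrightarrow> cmp1 A h (cmp1 A g f) = cmp1 A (cmp1 A h g) f"
    and cmp1_idt1: "f \<in> arr1 A \<Longrightarrow> cmp1 A (idt1 A (cod1 A f)) f = f \<and> cmp1 A f (idt1 A (dom1 A f)) = f"
    and src2_tgt2_typing: "a \<in> arr2 A \<Longrightarrow> src2 A a \<in> arr1 A \<and> tgt2 A a \<in> arr1 A \<and>
      dom1 A (src2 A a) = dom1 A (tgt2 A a) \<and> cod1 A (src2 A a) = cod1 A (tgt2 A a)"
    and idt2_typing: "f \<in> arr1 A \<Longrightarrow> idt2 A f \<in> arr2 A \<and> src2 A (idt2 A f) = f \<and> tgt2 A (idt2 A f) = f"
    and vcmp_typing: "b \<in> arr2 A \<Longrightarrow> a \<in> arr2 A \<Longrightarrow> src2 A b = tgt2 A a \<Longrightarrow>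
      vcmp A b a \<in> arr2 A \<and> src2 A (vcmp A b a) = src2 A a \<and> tgt2 A (vcmp A b a) = tgt2 A b"
    and vcmp_assoc': "c \<in> arr2 A \<Longrightarrow> b \<in> arr2 A \<Longrightarrow> a \<in> arr2 A \<Longrightarrow>
      src2 A c = tgt2 A b \<and> src2 A b = tgt2 A a \<Longrightarrow> vcmp A c (vcmp A b a) = vcmp A (vcmp A c b) a"
    and vcmp_idt2: "a \<in> arr2 A \<Longrightarrow> vcmp A (idt2 A (tgt2 A a)) a = a \<and> vcmp A a (idt2 A (src2 A a)) = a"
    and hcmp_typing: "b \<in> arr2 A \<Longrightarrow> a \<in> arr2 A \<Longrightarrow> dom1 A (src2 A b) = cod1 A (src2 A a) \<Longrightarrow>
      hcmp A b a \<in> arr2 A \<and> src2 A (hcmp A b a) = cmp1 A (src2 A b) (src2 A a) \<and>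
      tgt2 A (hcmp A b a) = cmp1 A (tgt2 A b) (tgt2 A a)"
    and hcmp_assoc': "c \<in> arr2 A \<Longrightarrow> b \<in> arr2 A \<Longrightarrow> a \<in> arr2 A \<Longrightarrow>
      dom1 A (src2 A c) = cod1 A (src2 A b) \<and> dom1 A (src2 A b) = cod1 A (src2 A a) \<Longrightarrow>
      hcmp A c (hcmp A b a) = hcmp A (hcmp A c b) a"
    and hcmp_idt2_idt1: "a \<in> arr2 A \<Longrightarrow> hcmp A (idt2 A (idt1 A (cod1 A (src2 A a)))) a = a \<and>
      hcmp A a (idt2 A (idt1 A (dom1 A (src2 A a)))) = a"
    and hcmp_idt2_idt2': "g \<in> arr1 A \<Longrightarrow> f \<in> arr1 A \<Longrightarrow> dom1 A g = cod1 A f \<Longrightarrow>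
      hcmp A (idt2 A g) (idt2 A f) = idt2 A (cmp1 A g f)"
    and interchange': "d \<in> arr2 A \<Longrightarrow> c \<in> arr2 A \<Longrightarrow> b \<in> arr2 A \<Longrightarrow> a \<in> arr2 A \<Longrightarrow>
      src2 A d = tgt2 A c \<and> src2 A b = tgt2 A a \<and> dom1 A (src2 A d) = cod1 A (src2 A b) \<Longrightarrow>
      hcmp A (vcmp A d c) (vcmp A b a) = vcmp A (hcmp A d b) (hcmp A c a)"

lemma two_cat_if_two_category: "two_category A \<Longrightarrow> two_cat A"
  unfolding two_category_def two_cat_def
  by (elim conjE, intro conjI allI impI) (simp_all add: Ball_def)

context two_cat
begin

lemma cmp1_hom: "g \<in> hom A y z \<Longrightarrow> f \<in> hom A x y \<Longrightarrow> cmp1 A g f \<in> hom A x z"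
  using cmp1_typing unfolding hom_def by auto

lemma cmp1_assoc:
  "h \<in> hom A y z \<Longrightarrow> g \<in> hom A x y \<Longrightarrow> f \<in> hom A w x \<Longrightarrow>
    cmp1 A (cmp1 A h g) f = cmp1 A h (cmp1 A g f)"
  using cmp1_assoc' unfolding hom_def by auto

lemma idt2_cell: "f \<in> arr1 A \<Longrightarrow> cell A (idt2 A f) f f"
  using idt2_typing unfolding cell_def by auto

lemma vcmp_idt2_left: "cell A a f g \<Longrightarrow> vcmp A (idt2 A g) a = a"
  using vcmp_idt2 unfolding cell_def by auto

lemma hcmp_cell:
  "cell A b g g' \<Longrightarrow> cell A a f f' \<Longrightarrow> g \<in> hom A y z \<Longrightarrow> f \<in> hom A x y \<Longrightarrow>
    cell A (hcmp A b a) (cmp1 A g f) (cmp1 A g' f')"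
  using hcmp_typing unfolding cell_def hom_def by auto

lemma hcmp_assoc:
  "cell A c h h' \<Longrightarrow> cell A b g g' \<Longrightarrow> cell A a f f' \<Longrightarrow>
    h \<in> hom A y z \<Longrightarrow> g \<in> hom A x y \<Longrightarrow> f \<in> hom A w x \<Longrightarrow>
    hcmp A (hcmp A c b) a = hcmp A c (hcmp A b a)"
  using hcmp_assoc' unfolding cell_def hom_def by auto

lemma hcmp_idt2_idt2:
  "g \<in> hom A y z \<Longrightarrow> f \<in> hom A x y \<Longrightarrow> hcmp A (idt2 A g) (idt2 A f) = idt2 A (cmp1 A g f)"
  using hcmp_idt2_idt2' unfolding hom_def by auto

lemma interchange:
  "cell A \<delta> g' g'' \<Longrightarrow> cell A \<gamma> g g' \<Longrightarrow> cell A \<beta> f' f'' \<Longrightarrow> cell A \<alpha> f f' \<Longrightarrow>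
    g \<in> hom A y z \<Longrightarrow> f \<in> hom A x y \<Longrightarrow>
    hcmp A (vcmp A \<delta> \<gamma>) (vcmp A \<beta> \<alpha>) = vcmp A (hcmp A \<delta> \<beta>) (hcmp A \<gamma> \<alpha>)"
  using interchange' src2_tgt2_typing unfolding cell_def hom_def by auto

lemma whisker_cmp1:
  assumes g: "g \<in> hom A y z" and f: "f \<in> hom A x y" and a: "cell A a h h'" and h: "h \<in> hom A w x"
  shows "hcmp A (idt2 A (cmp1 A g f)) a = hcmp A (idt2 A g) (hcmp A (idt2 A f) a)"
proof -
  have "g \<in> arr1 A" "f \<in> arr1 A" using g f unfolding hom_def by auto
  then show ?thesis
    using hcmp_idt2_idt2[OF g f] hcmp_assoc[OF idt2_cell idt2_cell a g f h] by simp
qed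

lemma whisker_vcmp:
  assumes k: "k \<in> hom A y z" and \<beta>: "cell A \<beta> g h" and \<alpha>: "cell A \<alpha> f g" and f: "f \<in> hom A x y"
  shows "hcmp A (idt2 A k) (vcmp A \<beta> \<alpha>) = vcmp A (hcmp A (idt2 A k) \<beta>) (hcmp A (idt2 A k) \<alpha>)"
proof -
  have id_k: "cell A (idt2 A k) k k" using k idt2_cell unfolding hom_def by auto
  then have "hcmp A (idt2 A k) (vcmp A \<beta> \<alpha>) = hcmp A (vcmp A (idt2 A k) (idt2 A k)) (vcmp A \<beta> \<alpha>)"
    using vcmp_idt2_left by simp
  also have "\<dots> = vcmp A (hcmp A (idt2 A k) \<beta>) (hcmp A (idt2 A k) \<alpha>)"
    using interchange[OF id_k id_k \<beta> \<alpha> k f] .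
  finally show ?thesis .
qed

lemma whiskered_pasting:
  assumes \<alpha>: "cell A \<alpha> f f'" and f: "f \<in> hom A x c"
    and D0: "D0 \<in> hom A c P" and D1: "D1 \<in> hom A c P" and D2: "D2 \<in> hom A c P"
    and D2_D0: "cmp1 A D2 f' = cmp1 A D0 f"
    and pasting: "hcmp A (idt2 A D1) \<alpha> = vcmp A (hcmp A (idt2 A D0) \<alpha>) (hcmp A (idt2 A D2) \<alpha>)"
    and k: "k \<in> hom A P y"
  shows "hcmp A (idt2 A (cmp1 A k D1)) \<alpha> =
    vcmp A (hcmp A (idt2 A (cmp1 A k D0)) \<alpha>) (hcmp A (idt2 A (cmp1 A k D2)) \<alpha>)"
proof -
  have D0_\<alpha>: "cell A (hcmp A (idt2 A D0) \<alpha>) (cmp1 A D2 f') (cmp1 A D0 f')"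
    using hcmp_cell[OF idt2_cell \<alpha> D0 f] D0 D2_D0 unfolding hom_def by auto
  have D2_\<alpha>: "cell A (hcmp A (idt2 A D2) \<alpha>) (cmp1 A D2 f) (cmp1 A D2 f')"
    using hcmp_cell[OF idt2_cell \<alpha> D2 f] D2 unfolding hom_def by auto
  have "hcmp A (idt2 A (cmp1 A k D1)) \<alpha> = hcmp A (idt2 A k) (hcmp A (idt2 A D1) \<alpha>)"
    using whisker_cmp1[OF k D1 \<alpha> f] .
  also have "\<dots> = vcmp A (hcmp A (idt2 A k) (hcmp A (idt2 A D0) \<alpha>)) (hcmp A (idt2 A k) (hcmp A (idt2 A D2) \<alpha>))"
    using whisker_vcmp[OF k D0_\<alpha> D2_\<alpha> cmp1_hom[OF D2 f]] pasting by simp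
  finally show ?thesis
    using whisker_cmp1[OF k D0 \<alpha> f] whisker_cmp1[OF k D2 \<alpha> f] by simp
qed

lemma opcomma_cell_with_identity_d0:
  assumes p: "p \<in> arr1 A" and opc: "is_opcomma A p c d0 d1 \<alpha>" and y: "y \<in> obj A"
    and h: "h \<in> hom A c y" and g: "g \<in> hom A c y" and hg: "cmp1 A h d0 = cmp1 A g d0"
    and \<xi>1: "cell A \<xi>1 (cmp1 A h d1) (cmp1 A g d1)"
    and compat: "hcmp A (idt2 A h) \<alpha> = vcmp A (hcmp A (idt2 A g) \<alpha>) (hcmp A \<xi>1 (idt2 A p))"
  shows "\<exists>\<xi>. cell A \<xi> h g \<and> hcmp A \<xi> (idt2 A d0) = idt2 A (cmp1 A h d0) \<and> hcmp A \<xi> (idt2 A d1) = \<xi>1"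
proof (rule opcomma_cell_exists[OF opc y h g _ \<xi>1])
  have d0: "d0 \<in> hom A (cod1 A p) c" and d1: "d1 \<in> hom A (cod1 A p) c" and p: "p \<in> hom A (dom1 A p) (cod1 A p)"
    and \<alpha>: "cell A \<alpha> (cmp1 A d1 p) (cmp1 A d0 p)"
    using p opc unfolding is_opcomma_def cell_def hom_def by auto
  have hd0: "cmp1 A h d0 \<in> hom A (cod1 A p) y" using cmp1_hom[OF h d0] .
  then show "cell A (idt2 A (cmp1 A h d0)) (cmp1 A h d0) (cmp1 A g d0)"
    using idt2_cell hg unfolding hom_def by auto
  have "hcmp A (idt2 A (cmp1 A h d0)) (idt2 A p) = idt2 A (cmp1 A h (cmp1 A d0 p))"
    using hcmp_idt2_idt2[OF hd0 p] cmp1_assoc[OF h d0 p] by simp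
  moreover have "cell A (hcmp A (idt2 A h) \<alpha>) (cmp1 A h (cmp1 A d1 p)) (cmp1 A h (cmp1 A d0 p))"
    using hcmp_cell[OF idt2_cell \<alpha> h cmp1_hom[OF d1 p]] h unfolding hom_def by auto
  ultimately show "vcmp A (hcmp A (idt2 A (cmp1 A h d0)) (idt2 A p)) (hcmp A (idt2 A h) \<alpha>) =
      vcmp A (hcmp A (idt2 A g) \<alpha>) (hcmp A \<xi>1 (idt2 A p))"
    using vcmp_idt2_left compat by simp
qed

end

theorem lemma4p6:
  fixes A :: "('o, 'a, 'c) tcat"
    and p :: 'a
    and c :: 'o and d0 d1 :: 'a and \<alpha> :: 'c
    and P :: 'o and D0 D1 D2 s0 :: 'a
    and t :: 'a and \<gamma> :: 'c and m \<eta> :: 'c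
    and l lb :: 'a
  assumes A: "two_category A"
    and p: "p \<in> arr1 A"
    \<comment> \<open>two-dimensional cokernel diagram of p\<close>
    and opc: "is_opcomma A p c d0 d1 \<alpha>"
    and po: "is_2pushout A d0 d1 P D2 D0"
    and D1: "D1 \<in> hom A c P" "cmp1 A D1 d1 = cmp1 A D2 d1" "cmp1 A D1 d0 = cmp1 A D0 d0"
      "hcmp A (idt2 A D1) \<alpha> = vcmp A (hcmp A (idt2 A D0) \<alpha>) (hcmp A (idt2 A D2) \<alpha>)"
    and s0: "s0 \<in> hom A c (cod1 A p)" "cmp1 A s0 d0 = idt1 A (cod1 A p)"
      "cmp1 A s0 d1 = idt1 A (cod1 A p)" "hcmp A (idt2 A s0) \<alpha> = idt2 A p"
    \<comment> \<open>right Kan extension of p along p, preserved by d0\<close>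
    and ran: "is_ran A p p t \<gamma>"
    and pres: "preserves_ran A d0 p p t \<gamma>"
    \<comment> \<open>codensity monad\<close>
    and m: "cell A m (cmp1 A t t) t"
      "vcmp A \<gamma> (hcmp A m (idt2 A p)) = vcmp A \<gamma> (hcmp A (idt2 A t) \<gamma>)"
    and \<eta>: "cell A \<eta> (idt1 A (cod1 A p)) t"
      "vcmp A \<gamma> (hcmp A \<eta> (idt2 A p)) = idt2 A p"
    \<comment> \<open>the 1-cells l and l-bar\<close>
    and l: "l \<in> hom A c (cod1 A p)" "cmp1 A l d0 = idt1 A (cod1 A p)" "cmp1 A l d1 = t"
      "hcmp A (idt2 A l) \<alpha> = \<gamma>"
    and lb: "lb \<in> hom A P (cod1 A p)" "cmp1 A lb D0 = l" "cmp1 A lb D2 = cmp1 A t l"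
  shows "\<exists>\<theta> lam. cell A \<theta> s0 l \<and> cell A lam (cmp1 A lb D1) l \<and>
           hcmp A \<theta> (idt2 A d1) = \<eta> \<and> hcmp A \<theta> (idt2 A d0) = idt2 A (idt1 A (cod1 A p)) \<and>
           hcmp A lam (idt2 A d1) = m \<and> hcmp A lam (idt2 A d0) = idt2 A (idt1 A (cod1 A p))"
proof -
  interpret two_cat A using A by (rule two_cat_if_two_category)
  define b where "b = cod1 A p"
  have b: "b \<in> obj A" and p_hom: "p \<in> hom A (dom1 A p) b"
    using p dom1_cod1_obj unfolding b_def hom_def by auto
  note s0 = s0[folded b_def] and l = l[folded b_def] and lb = lb[folded b_def] and \<eta> = \<eta>[folded b_def]
  have d0: "d0 \<in> hom A b c" and d1: "d1 \<in> hom A b c" and \<alpha>: "cell A \<alpha> (cmp1 A d1 p) (cmp1 A d0 p)"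
    using opc unfolding is_opcomma_def b_def by auto
  have D0: "D0 \<in> hom A c P" and D2: "D2 \<in> hom A c P" and D2_D0: "cmp1 A D2 d0 = cmp1 A D0 d1"
    using po d0 d1 unfolding is_2pushout_def hom_def by auto
  have t: "t \<in> hom A b b"
    using ran unfolding is_ran_def b_def by auto
  have "\<exists>\<theta>. cell A \<theta> s0 l \<and> hcmp A \<theta> (idt2 A d0) = idt2 A (cmp1 A s0 d0) \<and> hcmp A \<theta> (idt2 A d1) = \<eta>"
  proof (rule opcomma_cell_with_identity_d0[OF p opc b])
    show "hcmp A (idt2 A s0) \<alpha> = vcmp A (hcmp A (idt2 A l) \<alpha>) (hcmp A \<eta> (idt2 A p))"
      using s0(4) l(4) \<eta>(2) by simp
  qed (use s0 l \<eta> in auto)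
  then obtain \<theta> where \<theta>: "cell A \<theta> s0 l" "hcmp A \<theta> (idt2 A d0) = idt2 A (idt1 A b)" "hcmp A \<theta> (idt2 A d1) = \<eta>"
    using s0(2) by auto
  have lb_D1: "cmp1 A lb D1 \<in> hom A c b"
    using cmp1_hom lb(1) D1(1) by blast
  have lb_D1_d0: "cmp1 A (cmp1 A lb D1) d0 = idt1 A b"
    using cmp1_assoc[OF lb(1) D1(1) d0] cmp1_assoc[OF lb(1) D0 d0] D1(3) lb(2) l(2) by simp
  have lb_D1_d1: "cmp1 A (cmp1 A lb D1) d1 = cmp1 A t t"
  proof -
    have "cmp1 A (cmp1 A lb D1) d1 = cmp1 A (cmp1 A lb D2) d1"
      using cmp1_assoc[OF lb(1) D1(1) d1] cmp1_assoc[OF lb(1) D2 d1] D1(2) by simp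
    also have "\<dots> = cmp1 A t t"
      using cmp1_assoc[OF t l(1) d1] lb(3) l(3) by simp
    finally show ?thesis .
  qed
  have D2_D0_p: "cmp1 A D2 (cmp1 A d0 p) = cmp1 A D0 (cmp1 A d1 p)"
    using cmp1_assoc[OF D2 d0 p_hom] cmp1_assoc[OF D0 d1 p_hom] D2_D0 by simp
  have d1_p: "cmp1 A d1 p \<in> hom A (dom1 A p) c"
    using cmp1_hom d1 p_hom by blast
  have lb_D1_\<alpha>: "hcmp A (idt2 A (cmp1 A lb D1)) \<alpha> = vcmp A \<gamma> (hcmp A (idt2 A t) \<gamma>)"
    using whiskered_pasting[OF \<alpha> d1_p D0 D1(1) D2 D2_D0_p D1(4) lb(1)] lb(2,3)
      whisker_cmp1[OF t l(1) \<alpha> d1_p] l(4) by simp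
  have "\<exists>lam. cell A lam (cmp1 A lb D1) l \<and> hcmp A lam (idt2 A d0) = idt2 A (cmp1 A (cmp1 A lb D1) d0) \<and>
      hcmp A lam (idt2 A d1) = m"
  proof (rule opcomma_cell_with_identity_d0[OF p opc b lb_D1 l(1)])
    show "hcmp A (idt2 A (cmp1 A lb D1)) \<alpha> = vcmp A (hcmp A (idt2 A l) \<alpha>) (hcmp A m (idt2 A p))"
      using lb_D1_\<alpha> l(4) m(2) by simp
  qed (use lb_D1_d0 lb_D1_d1 l m in auto)
  then obtain lam where "cell A lam (cmp1 A lb D1) l" "hcmp A lam (idt2 A d0) = idt2 A (idt1 A b)"
      "hcmp A lam (idt2 A d1) = m"
    using lb_D1_d0 by auto
  with \<theta> show ?thesis
    unfolding b_def by blast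
qed

end
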